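(* Let $f_1,\dots,f_T\in\mathcal F_X(\alpha,l,G)$, and let $x_1,\dots,x_T$ be the outputs of online gradient descent with stepsize $1/l$: $$x_1=x_0,\qquad x_t=\Pi_X\big(x_{t-1}-\tfrac1l\nabla f_{t-1}(x_{t-1})\big)\ \text{ for } t\ge2.$$ Then $$\sum_{t=1}^T\|x_t-x_{t-1}\|^2\le\frac{2G}{l(1-\kappa)}\sum_{t=1}^T\|\theta_t-\theta_{t-1}\|,$$ where $\kappa=\sqrt{1-\alpha/l}$, $\theta_t=\arg\min_{x\in X}f_t(x)$ for $t\ge1$, and $\theta_0=x_0$.
   Context: $X\subseteq\mathbb R^n$ is nonempty, compact and convex, $\Pi_X$ is projection onto $X$, and $x_0\in X$. $\mathcal F_X(\alpha,l,G)$ (with $0<\alpha\le l$) is the set of differentiable $f:\mathbb R^n\to\mathbb R$ that are $\alpha$-strongly convex and $l$-smooth on $\mathbb R^n$ and satisfy $\|\nabla f(x)\|\le G$ for $x\in X$. *)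

theory Defs
  imports "HOL-Analysis.Analysis"
begin

text \<open>Gradient of a function on a Euclidean space (unique when f is differentiable).\<close>
definition grad :: "('a::euclidean_space \<Rightarrow> real) \<Rightarrow> 'a \<Rightarrow> 'a" where
  "grad f x = (SOME g. (f has_derivative (\<lambda>h. g \<bullet> h)) (at x))"

definition strongly_convex :: "real \<Rightarrow> ('a::euclidean_space \<Rightarrow> real) \<Rightarrow> bool" where
  "strongly_convex \<alpha> f \<longleftrightarrow>
     (\<forall>x y t. 0 \<le> t \<and> t \<le> 1 \<longrightarrow>
        f (t *\<^sub>R x + (1 - t) *\<^sub>R y) \<le> t * f x + (1 - t) * f y - \<alpha> / 2 * t * (1 - t) * (norm (x - y))\<^sup>2)"

definition smooth_grad :: "real \<Rightarrow> ('a::euclidean_space \<Rightarrow> real) \<Rightarrow> bool" where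
  "smooth_grad l f \<longleftrightarrow> (\<forall>x y. norm (grad f x - grad f y) \<le> l * norm (x - y))"

definition FX :: "'a::euclidean_space set \<Rightarrow> real \<Rightarrow> real \<Rightarrow> real \<Rightarrow> ('a \<Rightarrow> real) set" where
  "FX X \<alpha> l G = {f. (\<forall>x. f differentiable (at x)) \<and> strongly_convex \<alpha> f \<and> smooth_grad l f
                      \<and> (\<forall>x\<in>X. norm (grad f x) \<le> G)}"

fun ogd :: "'a::euclidean_space set \<Rightarrow> real \<Rightarrow> (nat \<Rightarrow> 'a \<Rightarrow> real) \<Rightarrow> 'a \<Rightarrow> nat \<Rightarrow> 'a" where
  "ogd X l f x0 0 = x0"
| "ogd X l f x0 (Suc 0) = x0"
| "ogd X l f x0 (Suc (Suc t)) =
     closest_point X (ogd X l f x0 (Suc t) - (1 / l) *\<^sub>R grad (f (Suc t)) (ogd X l f x0 (Suc t)))"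

definition theta :: "'a::euclidean_space set \<Rightarrow> (nat \<Rightarrow> 'a \<Rightarrow> real) \<Rightarrow> 'a \<Rightarrow> nat \<Rightarrow> 'a" where
  "theta X f x0 t = (if t = 0 then x0 else arg_min_on (f t) X)"

end

theory Submission
  imports Defs
begin

text \<open>One projected gradient step with stepsize 1/l moves the iterate towards the current minimizer
  \<open>\<theta>\<^sub>t\<close> by the factor \<open>\<kappa> = sqrt (1 - \<alpha>/l)\<close>, so the tracking errors \<open>e\<^sub>t = \<parallel>x\<^sub>t - \<theta>\<^sub>t\<parallel>\<close> satisfy
  \<open>e\<^sub>t\<^sub>+\<^sub>1 \<le> \<kappa> e\<^sub>t + \<parallel>\<theta>\<^sub>t\<^sub>+\<^sub>1 - \<theta>\<^sub>t\<parallel>\<close>; summing gives \<open>(1 - \<kappa>) \<Sum> e\<^sub>t \<le> \<Sum> \<parallel>\<theta>\<^sub>t - \<theta>\<^sub>t\<^sub>-\<^sub>1\<parallel>\<close>.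
  Each step has length at most \<open>G/l\<close> (projection is nonexpansive) and at most \<open>(1 + \<kappa>) e\<^sub>t \<le> 2 e\<^sub>t\<close>,
  so its square is at most \<open>2G/l \<cdot> e\<^sub>t\<close>.\<close>

lemma has_derivative_grad:
  fixes f :: "'a::euclidean_space \<Rightarrow> real"
  assumes "f differentiable (at x)"
  shows "(f has_derivative (\<lambda>h. grad f x \<bullet> h)) (at x)"
proof -
  obtain f' where f': "(f has_derivative f') (at x)"
    using assms differentiable_def by blast
  have "f' = (\<lambda>h. adjoint f' 1 \<bullet> h)"
    using adjoint_works[OF has_derivative_linear[OF f'], of _ 1] by (auto simp: inner_commute)
  with f' have "\<exists>g. (f has_derivative (\<lambda>h. g \<bullet> h)) (at x)" by metis
  then show ?thesis unfolding grad_def by (rule someI_ex)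
qed

lemma has_real_derivative_grad_line:
  fixes f :: "'a::euclidean_space \<Rightarrow> real"
  assumes "f differentiable (at (x + t *\<^sub>R d))"
  shows "((\<lambda>s. f (x + s *\<^sub>R d)) has_real_derivative (grad f (x + t *\<^sub>R d) \<bullet> d)) (at t within S)"
proof -
  have line: "((\<lambda>s. x + s *\<^sub>R d) has_derivative (\<lambda>s. s *\<^sub>R d)) (at t within S)"
    by (auto intro!: derivative_eq_intros)
  have "((\<lambda>s. f (x + s *\<^sub>R d)) has_derivative (\<lambda>s. grad f (x + t *\<^sub>R d) \<bullet> (s *\<^sub>R d))) (at t within S)"
    using has_derivative_compose[OF line has_derivative_at_withinI[OF has_derivative_grad[OF assms]]]
    by (simp add: o_def)
  moreover have "(\<lambda>s. grad f (x + t *\<^sub>R d) \<bullet> (s *\<^sub>R d)) = (*) (grad f (x + t *\<^sub>R d) \<bullet> d)"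
    by (auto simp: mult.commute)
  ultimately show ?thesis by (simp add: has_field_derivative_def)
qed

lemma strongly_convex_first_order:
  fixes f :: "'a::euclidean_space \<Rightarrow> real"
  assumes sc: "strongly_convex \<alpha> f" and df: "\<forall>z. f differentiable (at z)"
  shows "f x + grad f x \<bullet> (y - x) + \<alpha> / 2 * (norm (y - x))\<^sup>2 \<le> f y"
proof -
  define d where "d = y - x"
  define q where "q = (\<lambda>t. (f (x + t *\<^sub>R d) - f (x + 0 *\<^sub>R d)) / (t - 0))"
  define h where "h = (\<lambda>t::real. f y - f x - \<alpha> / 2 * (1 - t) * (norm d)\<^sup>2)"
  have "((\<lambda>s. f (x + s *\<^sub>R d)) has_real_derivative (grad f (x + 0 *\<^sub>R d) \<bullet> d)) (at 0 within {0<..})"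
    using df by (intro has_real_derivative_grad_line) auto
  then have q: "(q \<longlongrightarrow> grad f x \<bullet> d) (at_right 0)"
    unfolding q_def has_field_derivative_iff by simp
  have h: "(h \<longlongrightarrow> h 0) (at_right 0)"
    unfolding h_def by (intro tendsto_intros)
  have "eventually (\<lambda>t. q t \<le> h t) (at_right 0)"
    unfolding eventually_at_right[OF zero_less_one]
  proof (intro exI conjI allI impI)
    fix t :: real assume t: "0 < t" "t < 1"
    have "f (t *\<^sub>R y + (1 - t) *\<^sub>R x) \<le> t * f y + (1 - t) * f x - \<alpha> / 2 * t * (1 - t) * (norm (y - x))\<^sup>2"
      using sc t unfolding strongly_convex_def by auto
    moreover have "t *\<^sub>R y + (1 - t) *\<^sub>R x = x + t *\<^sub>R d"
      unfolding d_def by (simp add: algebra_simps)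
    ultimately have "f (x + t *\<^sub>R d) - f x \<le> t * h t"
      unfolding h_def d_def by (simp add: algebra_simps)
    then show "q t \<le> h t"
      unfolding q_def using t by (simp add: divide_simps mult.commute)
  qed simp
  then have "grad f x \<bullet> d \<le> h 0"
    by (rule tendsto_le[OF trivial_limit_at_right_real h q])
  then show ?thesis unfolding h_def d_def by simp
qed

lemma smooth_grad_quadratic_upper_bound:
  fixes f :: "'a::euclidean_space \<Rightarrow> real"
  assumes sm: "smooth_grad l f" and df: "\<forall>z. f differentiable (at z)"
  shows "f y \<le> f x + grad f x \<bullet> (y - x) + l / 2 * (norm (y - x))\<^sup>2"
proof -
  define d where "d = y - x"
  define \<psi> where "\<psi> = (\<lambda>t. f (x + t *\<^sub>R d) - t * (grad f x \<bullet> d) - l / 2 * t\<^sup>2 * (norm d)\<^sup>2)"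
  have "\<psi> 1 \<le> \<psi> 0"
  proof (rule DERIV_nonpos_imp_nonincreasing[of 0 1])
    fix t :: real assume t: "0 \<le> t" "t \<le> 1"
    define D where "D = grad f (x + t *\<^sub>R d) \<bullet> d - grad f x \<bullet> d - l * t * (norm d)\<^sup>2"
    have "(\<psi> has_real_derivative D) (at t)"
      unfolding \<psi>_def D_def using has_real_derivative_grad_line[of f x t d UNIV] df
      by (auto intro!: derivative_eq_intros simp: power2_eq_square)
    moreover have "D \<le> 0"
    proof -
      have "grad f (x + t *\<^sub>R d) \<bullet> d - grad f x \<bullet> d = (grad f (x + t *\<^sub>R d) - grad f x) \<bullet> d"
        by (simp add: inner_diff_left)
      also have "\<dots> \<le> norm (grad f (x + t *\<^sub>R d) - grad f x) * norm d"
        by (rule norm_cauchy_schwarz)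
      also have "\<dots> \<le> (l * norm (t *\<^sub>R d)) * norm d"
        using sm[unfolded smooth_grad_def, rule_format, of "x + t *\<^sub>R d" x]
        by (intro mult_right_mono) auto
      also have "\<dots> = l * t * (norm d)\<^sup>2"
        using t by (simp add: power2_eq_square)
      finally show ?thesis unfolding D_def by simp
    qed
    ultimately show "\<exists>y. DERIV \<psi> t :> y \<and> y \<le> 0" by blast
  qed simp
  then show ?thesis unfolding \<psi>_def d_def by simp
qed

lemma projected_gradient_step_contracts:
  fixes f :: "'a::euclidean_space \<Rightarrow> real"
  assumes df: "\<forall>z. f differentiable (at z)" and sc: "strongly_convex \<alpha> f" and sm: "smooth_grad l f"
    and X: "closed X" "convex X" and \<theta>: "\<theta> \<in> X" "\<forall>z\<in>X. f \<theta> \<le> f z"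
    and "0 < \<alpha>" "\<alpha> \<le> l"
  shows "norm (closest_point X (x - (1 / l) *\<^sub>R grad f x) - \<theta>) \<le> sqrt (1 - \<alpha> / l) * norm (x - \<theta>)"
proof -
  have l: "0 < l" using assms by linarith
  define g where "g = grad f x"
  define y where "y = closest_point X (x - (1 / l) *\<^sub>R g)"
  define a where "a = x - \<theta>"
  define b where "b = y - \<theta>"
  have "y \<in> X"
    unfolding y_def using X \<theta>(1) closest_point_in_set by blast
  then have min: "f \<theta> \<le> f y" using \<theta>(2) by blast
  have "(x - (1 / l) *\<^sub>R g - y) \<bullet> (\<theta> - y) \<le> 0"
    unfolding y_def using closest_point_dot[OF X(2,1) \<theta>(1)] .
  moreover have "(x - (1 / l) *\<^sub>R g - y) \<bullet> (\<theta> - y) = (1 / l) * (g \<bullet> b) - (a \<bullet> b - b \<bullet> b)"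
    unfolding a_def b_def by (simp add: algebra_simps inner_diff_left inner_diff_right)
  ultimately have "(1 / l) * (g \<bullet> b) \<le> a \<bullet> b - b \<bullet> b"
    by linarith
  then have proj: "g \<bullet> b \<le> l * (a \<bullet> b) - l * (b \<bullet> b)"
    using l by (simp add: field_simps)
  have upper: "f y \<le> f x + g \<bullet> (b - a) + l / 2 * (norm (b - a))\<^sup>2"
    using smooth_grad_quadratic_upper_bound[OF sm df, of y x]
    unfolding g_def a_def b_def by simp
  have lower: "f x + g \<bullet> (- a) + \<alpha> / 2 * (norm (- a))\<^sup>2 \<le> f \<theta>"
    using strongly_convex_first_order[OF sc df, of x \<theta>]
    unfolding g_def a_def by simp
  have "(norm (b - a))\<^sup>2 = b \<bullet> b - 2 * (a \<bullet> b) + a \<bullet> a"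
    by (simp add: power2_norm_eq_inner inner_diff_left inner_diff_right inner_commute)
  with upper lower min proj have "l * (b \<bullet> b) \<le> (l - \<alpha>) * (a \<bullet> a)"
    by (simp add: algebra_simps inner_diff_right power2_norm_eq_inner)
  then have "(norm b)\<^sup>2 \<le> (1 - \<alpha> / l) * (norm a)\<^sup>2"
    using l by (simp add: field_simps power2_norm_eq_inner)
  then have "sqrt ((norm b)\<^sup>2) \<le> sqrt ((1 - \<alpha> / l) * (norm a)\<^sup>2)"
    by (rule real_sqrt_le_mono)
  then show ?thesis
    unfolding a_def b_def y_def g_def by (simp add: real_sqrt_mult)
qed

lemma closest_point_step_norm_le:
  fixes X :: "'a::euclidean_space set"
  assumes "closed X" "convex X" "x \<in> X"
  shows "norm (closest_point X (x - v) - x) \<le> norm v"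
proof -
  have "norm (closest_point X (x - v) - x) = dist (closest_point X (x - v)) (closest_point X x)"
    using closest_point_self[OF assms(3)] by (simp add: dist_norm)
  also have "\<dots> \<le> dist (x - v) x"
    using assms by (intro closest_point_lipschitz) auto
  finally show ?thesis by (simp add: dist_norm)
qed

lemma arg_min_on_minimizes:
  assumes "compact X" "X \<noteq> {}" "continuous_on X f"
  shows "arg_min_on f X \<in> X \<and> (\<forall>z\<in>X. f (arg_min_on f X) \<le> (f z :: real))"
proof -
  obtain m where "m \<in> X" "\<forall>y\<in>X. f m \<le> f y"
    using continuous_attains_inf[OF assms] by blast
  then show ?thesis
    unfolding arg_min_on_def
    by (intro arg_minI[where Q="\<lambda>y. y \<in> X \<and> (\<forall>z\<in>X. f y \<le> f z)"]) (auto simp: not_less)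
qed

lemma ogd_in_set:
  assumes "closed X" "X \<noteq> {}" "x0 \<in> X"
  shows "ogd X l f x0 t \<in> X"
  using assms closest_point_in_set by (induction X l f x0 t rule: ogd.induct) auto

lemma ogd_Suc:
  assumes "1 \<le> t"
  shows "ogd X l f x0 (Suc t) =
    closest_point X (ogd X l f x0 t - (1 / l) *\<^sub>R grad (f t) (ogd X l f x0 t))"
  using assms by (cases t) auto

lemma ogd_step_bounds:
  fixes X :: "'a::euclidean_space set"
  assumes X: "X \<noteq> {}" "compact X" "convex X" and "x0 \<in> X"
    and "0 < \<alpha>" "\<alpha> \<le> l" and fX: "f t \<in> FX X \<alpha> l G" and t: "1 \<le> t"
  shows "norm (ogd X l f x0 (Suc t) - theta X f x0 t)
           \<le> sqrt (1 - \<alpha> / l) * norm (ogd X l f x0 t - theta X f x0 t)"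
    and "norm (ogd X l f x0 (Suc t) - ogd X l f x0 t) \<le> G / l"
proof -
  have df: "\<forall>z. f t differentiable (at z)"
    using fX unfolding FX_def by auto
  have closed: "closed X" using X compact_imp_closed by blast
  have x: "ogd X l f x0 t \<in> X"
    using ogd_in_set closed X assms(4) by blast
  have "continuous_on X (f t)"
    using df by (intro differentiable_imp_continuous_on) (simp add: differentiable_at_imp_differentiable_on)
  then have "theta X f x0 t \<in> X \<and> (\<forall>z\<in>X. f t (theta X f x0 t) \<le> f t z)"
    using arg_min_on_minimizes X t by (simp add: theta_def)
  then show "norm (ogd X l f x0 (Suc t) - theta X f x0 t)
           \<le> sqrt (1 - \<alpha> / l) * norm (ogd X l f x0 t - theta X f x0 t)"
    unfolding ogd_Suc[OF t] using fX assms closed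
    by (intro projected_gradient_step_contracts) (auto simp: FX_def)
  have "norm (ogd X l f x0 (Suc t) - ogd X l f x0 t) \<le> norm ((1 / l) *\<^sub>R grad (f t) (ogd X l f x0 t))"
    unfolding ogd_Suc[OF t] by (rule closest_point_step_norm_le[OF closed X(3) x])
  also have "\<dots> \<le> G / l"
    using fX x assms by (auto simp: FX_def divide_right_mono)
  finally show "norm (ogd X l f x0 (Suc t) - ogd X l f x0 t) \<le> G / l" .
qed

lemma contracting_recurrence_sum_le:
  fixes e d :: "nat \<Rightarrow> real"
  assumes "0 \<le> \<kappa>" and "e 0 = 0" and "\<And>t. 0 \<le> e t"
    and rec: "\<And>t. t < T \<Longrightarrow> e (Suc t) \<le> \<kappa> * e t + d (Suc t)"
  shows "(1 - \<kappa>) * (\<Sum>t=1..T. e t) \<le> (\<Sum>t=1..T. d t)"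
proof -
  have "(1 - \<kappa>) * (\<Sum>t=1..n. e t) + \<kappa> * e n \<le> (\<Sum>t=1..n. d t)" if "n \<le> T" for n
    using that
  proof (induction n)
    case 0
    then show ?case using assms(2) by simp
  next
    case (Suc n)
    then have "(1 - \<kappa>) * (\<Sum>t=1..n. e t) + \<kappa> * e n \<le> (\<Sum>t=1..n. d t)"
      and "e (Suc n) \<le> \<kappa> * e n + d (Suc n)"
      using rec by auto
    then show ?case by (simp add: algebra_simps)
  qed
  moreover have "0 \<le> \<kappa> * e T" using assms by simp
  ultimately show ?thesis by fastforce
qed

lemma tracking_sum_le:
  fixes u e d :: "nat \<Rightarrow> real"
  assumes "0 \<le> \<kappa>" "\<kappa> < 1" "0 \<le> c" and "e 0 = 0" and "\<And>t. 0 \<le> e t"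
    and rec: "\<And>t. t < T \<Longrightarrow> e (Suc t) \<le> \<kappa> * e t + d (Suc t)"
    and u: "\<And>t. t < T \<Longrightarrow> u (Suc t) \<le> c * e t"
  shows "(\<Sum>t=1..T. u t) \<le> c / (1 - \<kappa>) * (\<Sum>t=1..T. d t)"
proof -
  have "(\<Sum>t=1..T. u t) = (\<Sum>t<T. u (Suc t))"
    by (simp add: sum.atLeast1_atMost_eq)
  also have "\<dots> \<le> (\<Sum>t<T. c * e t)"
    using u by (intro sum_mono) auto
  also have "\<dots> \<le> c * (\<Sum>t=1..T. e t)"
  proof -
    have "(\<Sum>t<T. e t) \<le> (\<Sum>t<Suc T. e t)"
      using assms(5) by simp
    also have "\<dots> = e 0 + (\<Sum>t<T. e (Suc t))"
      by (rule sum.lessThan_Suc_shift)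
    also have "\<dots> = (\<Sum>t=1..T. e t)"
      using assms(4) by (simp add: sum.atLeast1_atMost_eq)
    finally show ?thesis
      using assms(3) by (simp add: sum_distrib_left[symmetric] mult_left_mono)
  qed
  also have "\<dots> \<le> c / (1 - \<kappa>) * (\<Sum>t=1..T. d t)"
    using mult_left_mono[OF contracting_recurrence_sum_le[OF assms(1,4,5) rec] assms(3)] assms(2)
    by (simp add: field_simps)
  finally show ?thesis .
qed

lemma ogd_tracking_recurrences:
  fixes X :: "'a::euclidean_space set"
  assumes X: "X \<noteq> {}" "compact X" "convex X" and x0: "x0 \<in> X"
    and "0 < \<alpha>" "\<alpha> \<le> l" and fX: "\<forall>t\<in>{1..T}. f t \<in> FX X \<alpha> l G" and t: "t < T"
  defines "e \<equiv> \<lambda>t. norm (ogd X l f x0 t - theta X f x0 t)"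
  shows "e (Suc t) \<le> sqrt (1 - \<alpha> / l) * e t + norm (theta X f x0 (Suc t) - theta X f x0 t)"
    and "(norm (ogd X l f x0 (Suc t) - ogd X l f x0 t))\<^sup>2 \<le> 2 * G / l * e t"
proof -
  let ?x = "ogd X l f x0" and ?\<theta> = "theta X f x0" and ?\<kappa> = "sqrt (1 - \<alpha> / l)"
  have "0 \<le> ?\<kappa>" "?\<kappa> \<le> 1" using assms by auto
  show "e (Suc t) \<le> ?\<kappa> * e t + norm (?\<theta> (Suc t) - ?\<theta> t)"
  proof (cases "t = 0")
    case True
    then show ?thesis by (simp add: e_def theta_def norm_minus_commute)
  next
    case False
    then have "norm (?x (Suc t) - ?\<theta> t) \<le> ?\<kappa> * e t"
      using ogd_step_bounds(1)[OF X x0 assms(5,6), of f t G] fX t by (simp add: e_def)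
    moreover have "e (Suc t) \<le> norm (?x (Suc t) - ?\<theta> t) + norm (?\<theta> (Suc t) - ?\<theta> t)"
      unfolding e_def using norm_triangle_ineq4[of "?x (Suc t) - ?\<theta> t" "?\<theta> (Suc t) - ?\<theta> t"]
      by simp
    ultimately show ?thesis by linarith
  qed
  show "(norm (?x (Suc t) - ?x t))\<^sup>2 \<le> 2 * G / l * e t"
  proof (cases "t = 0")
    case True
    then show ?thesis by (simp add: e_def theta_def)
  next
    case False
    define n where "n = norm (?x (Suc t) - ?x t)"
    have "n \<le> G / l"
      using ogd_step_bounds(2)[OF X x0 assms(5,6), of f t G] fX t False by (simp add: n_def)
    moreover have "n \<le> norm (?x (Suc t) - ?\<theta> t) + e t"
      unfolding n_def e_def using norm_triangle_ineq4[of "?x (Suc t) - ?\<theta> t" "?x t - ?\<theta> t"]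
      by simp
    moreover have "norm (?x (Suc t) - ?\<theta> t) \<le> ?\<kappa> * e t"
      using ogd_step_bounds(1)[OF X x0 assms(5,6), of f t G] fX t False by (simp add: e_def)
    moreover have "?\<kappa> * e t \<le> e t"
      using \<open>0 \<le> ?\<kappa>\<close> \<open>?\<kappa> \<le> 1\<close> by (simp add: e_def mult_left_le_one_le)
    ultimately have "n \<le> G / l" "n \<le> 2 * e t" "0 \<le> n" by (auto simp: n_def)
    then have "n * n \<le> G / l * (2 * e t)" by (meson mult_mono order_trans)
    then show ?thesis by (simp add: n_def power2_eq_square mult.commute mult.left_commute)
  qed
qed

theorem lemma8:
  fixes X :: "'a::euclidean_space set" and f :: "nat \<Rightarrow> 'a \<Rightarrow> real"
    and x0 :: 'a and \<alpha> l G :: real and T :: nat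
  assumes "X \<noteq> {}" and "compact X" and "convex X" and "x0 \<in> X"
    and "0 < \<alpha>" and "\<alpha> \<le> l"
    and "\<forall>t\<in>{1..T}. f t \<in> FX X \<alpha> l G"
  shows "(\<Sum>t=1..T. (norm (ogd X l f x0 t - ogd X l f x0 (t - 1)))\<^sup>2)
     \<le> 2 * G / (l * (1 - sqrt (1 - \<alpha> / l))) * (\<Sum>t=1..T. norm (theta X f x0 t - theta X f x0 (t - 1)))"
proof (cases "T = 0")
  case False
  have l: "0 < l" using assms by linarith
  have "f 1 \<in> FX X \<alpha> l G" using assms(7) False by simp
  then have "norm (grad (f 1) x0) \<le> G"
    using assms(4) by (simp add: FX_def)
  then have "0 \<le> G" using norm_ge_zero order_trans by blast
  have "sqrt (1 - \<alpha> / l) < 1" using assms l by (simp add: field_simps)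
  have "(\<Sum>t=1..T. (norm (ogd X l f x0 t - ogd X l f x0 (t - 1)))\<^sup>2)
     \<le> 2 * G / l / (1 - sqrt (1 - \<alpha> / l)) * (\<Sum>t=1..T. norm (theta X f x0 t - theta X f x0 (t - 1)))"
    using ogd_tracking_recurrences[OF assms] \<open>0 \<le> G\<close> l
    by (intro tracking_sum_le[where e="\<lambda>t. norm (ogd X l f x0 t - theta X f x0 t)"]
        \<open>sqrt (1 - \<alpha> / l) < 1\<close>) (auto simp: assms(4,6) theta_def)
  then show ?thesis by simp
qed simp

end
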